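(* Let $(Q,\mathcal S)$ be a hypergraph with $Q=\{q_1,\dots,q_m\}$ and $\mathcal S=\{S_1,\dots,S_n\}$, where $n\ge 2$, every $S_j$ is a nonempty subset of $Q$, and $S_n=Q$. Let $G$ be the graph constructed from $(Q,\mathcal S)$ as follows. Its vertex set consists of the vertices $q_1,\dots,q_m$; vertices $S_1,\dots,S_n$; vertices $S_1',\dots,S_n'$; a vertex $q^i_j$ for every pair $(i,j)$ with $q_i\in S_j$ (let $Q'$ be the set of these); and vertices $q^*,u_1,u_2,v,w$. Its edges are: $q^i_jq_i$ and $q^i_jS_j$ for every $q^i_j\in Q'$; $q_iS_j'$ whenever $q_i\in S_j$; $S_jS_k'$ for all $j,k\in\{1,\dots,n\}$; $q^*u_1$, $q^*u_2$; $q^*q^i_j$ for every $q^i_j\in Q'$; $u_1S_j$ and $u_2S_j$ for every $j$; $u_1v$, $u_2v$; and $wS_j'$ for every $j$. Then $(Q,\mathcal S)$ has a $2$-colouring if and only if $G$ contains the path $P_5$ on five vertices as a contraction.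
   Context: A $2$-colouring of a hypergraph $(Q,\mathcal S)$ is a partition $(Q_1,Q_2)$ of $Q$ such that $Q_1\cap S\neq\emptyset$ and $Q_2\cap S\neq\emptyset$ for every $S\in\mathcal S$. Contracting an edge $uv$ means deleting $u$ and $v$ and adding a new vertex adjacent to $(N(u)\cup N(v))\setminus\{u,v\}$ (no multiple edges or loops). A graph contains $H$ as a contraction if $H$ can be obtained from it by a sequence of edge contractions. *)

theory Defs
  imports Main
begin

text \<open>A simple graph is a pair (V, E) with E a set of 2-element subsets of V.\<close>
type_synonym 'a graph = "'a set \<times> 'a set set"

text \<open>Loops and multiple
 edges disappear automatically. The result is isomorphic to the contraction
 with a fresh vertex.\<close>
definition contract_edge :: "'a graph \<Rightarrow> 'a \<Rightarrow> 'a \<Rightarrow> 'a graph" where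
  "contract_edge G u v =
     (let f = (\<lambda>x. if x = v then u else x)
      in (fst G - {v}, {f ` e | e. e \<in> snd G \<and> card (f ` e) = 2}))"

inductive contracts_to :: "'a graph \<Rightarrow> 'a graph \<Rightarrow> bool" where
  refl: "contracts_to G G"
| step: "{u, v} \<in> snd G \<Longrightarrow> u \<noteq> v \<Longrightarrow> contracts_to (contract_edge G u v) H
           \<Longrightarrow> contracts_to G H"

definition graph_iso :: "'a graph \<Rightarrow> 'b graph \<Rightarrow> bool" where
  "graph_iso G H \<longleftrightarrow> (\<exists>f. bij_betw f (fst G) (fst H) \<and>
     (\<forall>x\<in>fst G. \<forall>y\<in>fst G. {x, y} \<in> snd G \<longleftrightarrow> {f x, f y} \<in> snd H))"

definition has_contraction :: "'a graph \<Rightarrow> 'b graph \<Rightarrow> bool" where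
  "has_contraction G H \<longleftrightarrow> (\<exists>G'. contracts_to G G' \<and> graph_iso G' H)"

definition path_graph :: "nat \<Rightarrow> nat graph" where
  "path_graph k = ({0..<k}, {{i, Suc i} | i. Suc i < k})"

definition two_colourable :: "'q set \<Rightarrow> (nat \<Rightarrow> 'q set) \<Rightarrow> nat \<Rightarrow> bool" where
  "two_colourable Q S n \<longleftrightarrow> (\<exists>Q1 Q2. Q1 \<union> Q2 = Q \<and> Q1 \<inter> Q2 = {} \<and>
     (\<forall>j\<in>{1..n}. Q1 \<inter> S j \<noteq> {} \<and> Q2 \<inter> S j \<noteq> {}))"

datatype 'q gvert = Qv 'q | Sv nat | Sp nat | Qij 'q nat | Qstar | U1 | U2 | Vv | Wv

definition Qprime :: "(nat \<Rightarrow> 'q set) \<Rightarrow> nat \<Rightarrow> 'q gvert set" where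
  "Qprime S n = {Qij q j | q j. j \<in> {1..n} \<and> q \<in> S j}"

definition constr_graph :: "'q set \<Rightarrow> (nat \<Rightarrow> 'q set) \<Rightarrow> nat \<Rightarrow> 'q gvert graph" where
  "constr_graph Q S n =
    (Qv ` Q \<union> Sv ` {1..n} \<union> Sp ` {1..n} \<union> Qprime S n \<union> {Qstar, U1, U2, Vv, Wv},
     {{Qij q j, Qv q} | q j. j \<in> {1..n} \<and> q \<in> S j}
     \<union> {{Qij q j, Sv j} | q j. j \<in> {1..n} \<and> q \<in> S j}
     \<union> {{Qv q, Sp j} | q j. j \<in> {1..n} \<and> q \<in> S j}
     \<union> {{Sv j, Sp k} | j k. j \<in> {1..n} \<and> k \<in> {1..n}}
     \<union> {{Qstar, U1}, {Qstar, U2}}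
     \<union> {{Qstar, x} | x. x \<in> Qprime S n}
     \<union> {{U1, Sv j} | j. j \<in> {1..n}}
     \<union> {{U2, Sv j} | j. j \<in> {1..n}}
     \<union> {{U1, Vv}, {U2, Vv}}
     \<union> {{Wv, Sp j} | j. j \<in> {1..n}})"

end

theory Submission
  imports Defs
begin

text \<open>A contraction of a graph onto the path 0 - 1 - \<dots> - (k-1) is the same as a labelling \<psi> of
  its vertices by 0, \<dots>, k-1 that changes by at most one along edges, whose level sets are connected,
  and in which consecutive levels are joined by an edge.

  Given a 2-colouring (Q1, Q2), the levels {w}, S' \<union> Q1, S \<union> Q2 \<union> Q', {q*, u1, u2}, {v} are such
  a labelling of G.  Conversely, the labels 0 and 4 sit on two vertices at distance at least 4, and the
  only such pairs are {w, v}, {w, q*} and {q_i, v}.  In the last two cases the level 3 is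
  disconnected.  In the first one the labels of all S_j, S_j', u_1, u_2, q* are forced, and the
  elements q_i labelled 1 form one colour class: the connected level 1 gives every S_j' a neighbour
  q_i \<in> S_j labelled 1, and the level 2 can only be connected if every S_j contains an element
  not labelled 1.\<close>

section \<open>Contractions and their witness maps\<close>

definition finite_graph :: "'a graph \<Rightarrow> bool" where
  "finite_graph G \<longleftrightarrow> finite (fst G) \<and> (\<forall>e\<in>snd G. e \<subseteq> fst G \<and> card e = 2)"

definition induced_adj :: "'a set set \<Rightarrow> 'a set \<Rightarrow> ('a \<times> 'a) set" where
  "induced_adj E A = {(x, y). {x, y} \<in> E \<and> x \<in> A \<and> y \<in> A}"

definition connected_in :: "'a set set \<Rightarrow> 'a set \<Rightarrow> bool" where
  "connected_in E A \<longleftrightarrow> (\<forall>x\<in>A. \<forall>y\<in>A. (x, y) \<in> (induced_adj E A)\<^sup>*)"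

definition merge :: "'a \<Rightarrow> 'a \<Rightarrow> 'a \<Rightarrow> 'a" where
  "merge u v x = (if x = v then u else x)"

lemma fst_contract_edge: "fst (contract_edge G u v) = fst G - {v}"
  by (simp add: contract_edge_def Let_def)

lemma snd_contract_edge:
  "snd (contract_edge G u v) = {merge u v ` e | e. e \<in> snd G \<and> card (merge u v ` e) = 2}"
  by (simp add: contract_edge_def Let_def merge_def)

lemma finite_graph_edge: "finite_graph G \<Longrightarrow> {x, y} \<in> snd G \<Longrightarrow> x \<in> fst G \<and> y \<in> fst G \<and> x \<noteq> y"
  unfolding finite_graph_def by (cases "x = y") auto

lemma card_image_doubleton: "card (f ` {x, y}) = 2 \<longleftrightarrow> f x \<noteq> f y"
  by (cases "f x = f y") auto

lemma merge_in_contract_edge: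
  "x \<in> fst G \<Longrightarrow> u \<in> fst G \<Longrightarrow> u \<noteq> v \<Longrightarrow> merge u v x \<in> fst (contract_edge G u v)"
  by (auto simp: fst_contract_edge merge_def)

lemma merge_ident: "x \<in> fst (contract_edge G u v) \<Longrightarrow> merge u v x = x"
  by (auto simp: fst_contract_edge merge_def)

lemma edge_contract_edge:
  "{x, y} \<in> snd G \<Longrightarrow> merge u v x \<noteq> merge u v y \<Longrightarrow>
     {merge u v x, merge u v y} \<in> snd (contract_edge G u v)"
  unfolding snd_contract_edge by (rule CollectI, rule exI[of _ "{x, y}"]) (simp add: card_image_doubleton)

lemma edge_contract_edgeE:
  assumes "finite_graph G" "{a, b} \<in> snd (contract_edge G u v)"
  obtains x y where "{x, y} \<in> snd G" "x \<in> fst G" "y \<in> fst G" "merge u v x = a" "merge u v y = b"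
proof -
  obtain e where e: "e \<in> snd G" "{a, b} = merge u v ` e"
    using assms(2) by (auto simp: snd_contract_edge)
  then have "e \<subseteq> fst G" "card e = 2" using assms(1) unfolding finite_graph_def by auto
  then obtain x y where xy: "e = {x, y}" "x \<in> fst G" "y \<in> fst G"
    unfolding card_2_iff by blast
  from e(2) xy(1) consider "merge u v x = a" "merge u v y = b" | "merge u v y = a" "merge u v x = b"
    by (auto simp: doubleton_eq_iff)
  then show ?thesis
  proof cases
    case 1 then show ?thesis using that e(1) xy by blast
  next
    case 2 then show ?thesis using that[of y x] e(1) xy by (simp add: insert_commute)
  qed
qed

lemma image_merge: "u \<in> fst G \<Longrightarrow> u \<noteq> v \<Longrightarrow> merge u v ` fst G = fst (contract_edge G u v)"
  by (force simp: merge_def fst_contract_edge)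

lemma finite_graph_contract_edge:
  assumes "finite_graph G" "{u, v} \<in> snd G"
  shows "finite_graph (contract_edge G u v)"
  unfolding finite_graph_def
proof
  show "finite (fst (contract_edge G u v))"
    using assms(1) by (simp add: finite_graph_def fst_contract_edge)
  show "\<forall>e\<in>snd (contract_edge G u v). e \<subseteq> fst (contract_edge G u v) \<and> card e = 2"
  proof
    fix e assume "e \<in> snd (contract_edge G u v)"
    then obtain e0 where e0: "e0 \<in> snd G" "card (merge u v ` e0) = 2" "e = merge u v ` e0"
      unfolding snd_contract_edge by blast
    have "u \<in> fst G" "u \<noteq> v" using finite_graph_edge[OF assms] by auto
    then have "merge u v ` e0 \<subseteq> fst (contract_edge G u v)"
      using e0(1) assms(1) image_merge[of u G v] unfolding finite_graph_def by auto
    with e0(2,3) show "e \<subseteq> fst (contract_edge G u v) \<and> card e = 2" by simp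
  qed
qed

lemma induced_adj_sym: "(x, y) \<in> induced_adj E A \<Longrightarrow> (y, x) \<in> induced_adj E A"
  by (auto simp: induced_adj_def insert_commute)

lemma connected_inI_hub:
  assumes "\<And>x. x \<in> A \<Longrightarrow> (x, h) \<in> (induced_adj E A)\<^sup>*"
  shows "connected_in E A"
proof -
  have "sym (induced_adj E A)" by (auto intro: symI induced_adj_sym)
  then have "(h, y) \<in> (induced_adj E A)\<^sup>*" if "y \<in> A" for y
    using assms[OF that] by (meson sym_rtrancl symD)
  then show ?thesis unfolding connected_in_def using assms by (meson rtrancl_trans)
qed

lemma induced_adj_level:
  "finite_graph G \<Longrightarrow> {a, b} \<in> snd G \<Longrightarrow> f a = c \<Longrightarrow> f b = c \<Longrightarrow>
    (a, b) \<in> induced_adj (snd G) {x \<in> fst G. f x = c}"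
  using finite_graph_edge[of G a b] by (simp add: induced_adj_def)

lemma connected_in_neighbour:
  assumes "connected_in E A" "x \<in> A" "y \<in> A" "x \<noteq> y"
  obtains z where "{x, z} \<in> E" "z \<in> A"
proof -
  have "(x, y) \<in> (induced_adj E A)\<^sup>*" using assms unfolding connected_in_def by blast
  with assms(4) obtain z where "(x, z) \<in> induced_adj E A" by (metis converse_rtranclE)
  with that show ?thesis by (auto simp: induced_adj_def)
qed

lemma rtrancl_map_reflcl:
  assumes "(p, q) \<in> R\<^sup>*" "\<And>a b. (a, b) \<in> R \<Longrightarrow> f a = f b \<or> (f a, f b) \<in> R'"
  shows "(f p, f q) \<in> R'\<^sup>*"
  using assms(1)
proof (induction rule: rtrancl_induct)
  case (step y z)
  then show ?case using assms(2)[of y z] by (metis rtrancl.rtrancl_into_rtrancl)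
qed simp

lemma connected_in_image_merge:
  assumes "connected_in (snd G) C"
  shows "connected_in (snd (contract_edge G u v)) (merge u v ` C)"
  unfolding connected_in_def
proof (intro ballI)
  let ?f = "merge u v"
  fix a b assume "a \<in> ?f ` C" "b \<in> ?f ` C"
  then obtain a' b' where "a' \<in> C" "b' \<in> C" "a = ?f a'" "b = ?f b'" by blast
  moreover have "(a', b') \<in> (induced_adj (snd G) C)\<^sup>*"
    using assms \<open>a' \<in> C\<close> \<open>b' \<in> C\<close> unfolding connected_in_def by blast
  ultimately show "(a, b) \<in> (induced_adj (snd (contract_edge G u v)) (?f ` C))\<^sup>*"
  proof (simp only:, elim rtrancl_map_reflcl)
    fix p q assume "(p, q) \<in> induced_adj (snd G) C"
    then show "?f p = ?f q \<or> (?f p, ?f q) \<in> induced_adj (snd (contract_edge G u v)) (?f ` C)"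
      by (auto simp: induced_adj_def intro: edge_contract_edge)
  qed
qed

lemma connected_in_closed:
  assumes "connected_in E A" "x \<in> A" "y \<in> A" "x \<in> C"
    and closed: "\<And>a b. a \<in> C \<Longrightarrow> a \<in> A \<Longrightarrow> {a, b} \<in> E \<Longrightarrow> b \<in> A \<Longrightarrow> b \<in> C"
  shows "y \<in> C"
proof -
  have "(x, y) \<in> (induced_adj E A)\<^sup>*" using assms(1-3) unfolding connected_in_def by blast
  then show ?thesis
    using assms(4) by (induction rule: rtrancl_induct) (auto simp: induced_adj_def intro: closed)
qed

lemma connected_in_preimage_merge:
  assumes G: "finite_graph G" and uv: "{u, v} \<in> snd G"
    and conn: "connected_in (snd (contract_edge G u v)) B1"
  shows "connected_in (snd G) {x \<in> fst G. merge u v x \<in> B1}"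
proof -
  let ?f = "merge u v" and ?B = "{x \<in> fst G. merge u v x \<in> B1}"
  let ?R = "induced_adj (snd G) ?B" and ?R1 = "induced_adj (snd (contract_edge G u v)) B1"
  have same: "(a, b) \<in> ?R\<^sup>*" if "a \<in> ?B" "b \<in> ?B" "?f a = ?f b" for a b
  proof (cases "a = b")
    case False
    then have "{a, b} = {u, v}" using that(3) by (auto simp: merge_def split: if_splits)
    then have "(a, b) \<in> ?R" using that(1,2) uv by (auto simp: induced_adj_def)
    then show ?thesis by blast
  qed simp
  have lift: "(a', b') \<in> ?R\<^sup>*"
    if "(a, b) \<in> ?R1\<^sup>*" "a' \<in> ?B" "b' \<in> ?B" "?f a' = a" "?f b' = b" for a b a' b'
    using that
  proof (induction arbitrary: b' rule: rtrancl_induct)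
    case base then show ?case using same by simp
  next
    case (step b c)
    from step.hyps(2) have "{b, c} \<in> snd (contract_edge G u v)" "b \<in> B1" "c \<in> B1"
      by (auto simp: induced_adj_def)
    then obtain x y where xy: "{x, y} \<in> snd G" "x \<in> ?B" "y \<in> ?B" "?f x = b" "?f y = c"
      by (metis (mono_tags, lifting) G edge_contract_edgeE mem_Collect_eq)
    have "(a', x) \<in> ?R\<^sup>*" using step.IH step.prems(1,3) xy(2,4) by blast
    moreover have "(x, y) \<in> ?R" using xy(1-3) by (simp add: induced_adj_def)
    moreover have "(y, b') \<in> ?R\<^sup>*" using same xy(3,5) step.prems(2,4) by simp
    ultimately show ?case by (meson rtrancl_into_rtrancl rtrancl_trans)
  qed
  show ?thesis unfolding connected_in_def
  proof (intro ballI)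
    fix a b assume "a \<in> ?B" "b \<in> ?B"
    moreover from this have "(?f a, ?f b) \<in> ?R1\<^sup>*" using conn unfolding connected_in_def by blast
    ultimately show "(a, b) \<in> ?R\<^sup>*" using lift by blast
  qed
qed

text \<open>\<phi> maps every vertex of G to the vertex of H that its bag is contracted to.\<close>

definition contraction_map :: "'a graph \<Rightarrow> 'b graph \<Rightarrow> ('a \<Rightarrow> 'b) \<Rightarrow> bool" where
  "contraction_map G H \<phi> \<longleftrightarrow> \<phi> ` fst G = fst H \<and>
     (\<forall>x y. {x, y} \<in> snd G \<longrightarrow> \<phi> x = \<phi> y \<or> {\<phi> x, \<phi> y} \<in> snd H) \<and>
     (\<forall>c\<in>fst H. connected_in (snd G) {x \<in> fst G. \<phi> x = c})"

lemma contraction_map_id: "contraction_map G G id"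
proof -
  have "{x \<in> fst G. x = c} = {c}" if "c \<in> fst G" for c using that by auto
  then show ?thesis by (simp add: contraction_map_def connected_in_def)
qed

lemma contraction_map_contract_edge:
  assumes G: "finite_graph G" and uv: "{u, v} \<in> snd G"
    and \<phi>: "contraction_map (contract_edge G u v) H \<phi>"
  shows "contraction_map G H (\<phi> \<circ> merge u v)"
proof -
  let ?G1 = "contract_edge G u v" and ?f = "merge u v"
  have u: "u \<in> fst G" "u \<noteq> v" using finite_graph_edge[OF G uv] by auto
  have "(\<phi> \<circ> ?f) ` fst G = \<phi> ` (?f ` fst G)" by (simp only: image_comp)
  also have "\<dots> = fst H" using \<phi> image_merge[OF u] by (simp add: contraction_map_def)
  finally have image: "(\<phi> \<circ> ?f) ` fst G = fst H" .
  have edges: "(\<phi> \<circ> ?f) x = (\<phi> \<circ> ?f) y \<or> {(\<phi> \<circ> ?f) x, (\<phi> \<circ> ?f) y} \<in> snd H"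
    if xy: "{x, y} \<in> snd G" for x y
  proof (cases "?f x = ?f y")
    case False
    then have "{?f x, ?f y} \<in> snd ?G1" using edge_contract_edge[OF xy] by blast
    then show ?thesis using \<phi> unfolding contraction_map_def by simp
  qed simp
  have bags: "connected_in (snd G) {x \<in> fst G. (\<phi> \<circ> ?f) x = c}" if "c \<in> fst H" for c
  proof -
    have "connected_in (snd ?G1) {y \<in> fst ?G1. \<phi> y = c}"
      using \<phi> that by (simp add: contraction_map_def)
    from connected_in_preimage_merge[OF G uv this]
    have "connected_in (snd G) {x \<in> fst G. ?f x \<in> {y \<in> fst ?G1. \<phi> y = c}}" .
    moreover have "{x \<in> fst G. ?f x \<in> {y \<in> fst ?G1. \<phi> y = c}} = {x \<in> fst G. (\<phi> \<circ> ?f) x = c}"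
      using merge_in_contract_edge[OF _ u] by auto
    ultimately show ?thesis by simp
  qed
  show ?thesis unfolding contraction_map_def using image edges bags by blast
qed

lemma contracts_to_contraction_map:
  assumes "contracts_to G H" "finite_graph G"
  obtains \<phi> where "contraction_map G H \<phi>"
  using assms
proof (induction arbitrary: thesis rule: contracts_to.induct)
  case (refl G)
  then show ?case using contraction_map_id by blast
next
  case (step u v G H)
  obtain \<phi> where "contraction_map (contract_edge G u v) H \<phi>"
    using step.IH finite_graph_contract_edge[OF step.prems(2) step.hyps(1)] by blast
  then show ?case using step.prems(1) contraction_map_contract_edge[OF step.prems(2) step.hyps(1)] by blast
qed

definition bags_adjacent :: "'a graph \<Rightarrow> ('a \<Rightarrow> 'b) \<Rightarrow> 'b \<Rightarrow> 'b \<Rightarrow> bool" where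
  "bags_adjacent G \<phi> c d \<longleftrightarrow> (\<exists>x\<in>fst G. \<exists>y\<in>fst G. {x, y} \<in> snd G \<and> \<phi> x = c \<and> \<phi> y = d)"

lemma merge_invariant: "\<phi> u = \<phi> v \<Longrightarrow> \<phi> (merge u v x) = \<phi> x"
  by (simp add: merge_def)

lemma bag_contract_edge:
  assumes "finite_graph G" "{u, v} \<in> snd G" "\<phi> u = \<phi> v"
  shows "{w \<in> fst (contract_edge G u v). \<phi> w = c} = merge u v ` {w \<in> fst G. \<phi> w = c}"
proof
  show "{w \<in> fst (contract_edge G u v). \<phi> w = c} \<subseteq> merge u v ` {w \<in> fst G. \<phi> w = c}"
  proof
    fix w assume w: "w \<in> {w \<in> fst (contract_edge G u v). \<phi> w = c}"
    then have "merge u v w = w" using merge_ident[of w G u v] by simp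
    moreover have "w \<in> {w \<in> fst G. \<phi> w = c}" using w by (simp add: fst_contract_edge)
    ultimately show "w \<in> merge u v ` {w \<in> fst G. \<phi> w = c}" by (metis image_eqI)
  qed
  have u: "u \<in> fst G" "u \<noteq> v" using finite_graph_edge[OF assms(1,2)] by auto
  show "merge u v ` {w \<in> fst G. \<phi> w = c} \<subseteq> {w \<in> fst (contract_edge G u v). \<phi> w = c}"
  proof
    fix w assume "w \<in> merge u v ` {w \<in> fst G. \<phi> w = c}"
    then obtain w' where "w' \<in> fst G" "\<phi> w' = c" "w = merge u v w'" by blast
    then show "w \<in> {w \<in> fst (contract_edge G u v). \<phi> w = c}"
      using merge_in_contract_edge[OF _ u] merge_invariant[of \<phi> u v w', OF assms(3)] by simp
  qed
qed

lemma bags_adjacent_contract_edge: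
  assumes G: "finite_graph G" and uv: "{u, v} \<in> snd G" and \<phi>: "\<phi> u = \<phi> v" and "c \<noteq> d"
  shows "bags_adjacent (contract_edge G u v) \<phi> c d \<longleftrightarrow> bags_adjacent G \<phi> c d"
proof
  assume "bags_adjacent (contract_edge G u v) \<phi> c d"
  then obtain a b where ab: "{a, b} \<in> snd (contract_edge G u v)" "\<phi> a = c" "\<phi> b = d"
    unfolding bags_adjacent_def by blast
  obtain x y where "{x, y} \<in> snd G" "x \<in> fst G" "y \<in> fst G" "merge u v x = a" "merge u v y = b"
    using edge_contract_edgeE[OF G ab(1)] .
  moreover from this have "\<phi> x = c" "\<phi> y = d" using ab(2,3) merge_invariant[of \<phi> u v, OF \<phi>] by auto
  ultimately show "bags_adjacent G \<phi> c d" unfolding bags_adjacent_def by blast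
next
  have u: "u \<in> fst G" "u \<noteq> v" using finite_graph_edge[OF G uv] by auto
  assume "bags_adjacent G \<phi> c d"
  then obtain a b where ab: "a \<in> fst G" "b \<in> fst G" "{a, b} \<in> snd G" "\<phi> a = c" "\<phi> b = d"
    unfolding bags_adjacent_def by blast
  have \<phi>_merge: "\<phi> (merge u v a) = c" "\<phi> (merge u v b) = d"
    using ab(4,5) merge_invariant[of \<phi> u v, OF \<phi>] by auto
  then have "{merge u v a, merge u v b} \<in> snd (contract_edge G u v)"
    using edge_contract_edge[OF ab(3)] \<open>c \<noteq> d\<close> by metis
  moreover have "merge u v a \<in> fst (contract_edge G u v)" "merge u v b \<in> fst (contract_edge G u v)"
    using merge_in_contract_edge[OF _ u] ab(1,2) by auto
  ultimately show "bags_adjacent (contract_edge G u v) \<phi> c d"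
    unfolding bags_adjacent_def using \<phi>_merge by blast
qed

lemma contract_edge_in_bag:
  assumes G: "finite_graph G" and xz: "{x, z} \<in> snd G" "\<phi> x = \<phi> z"
    and bags: "\<forall>c\<in>\<phi> ` fst G. connected_in (snd G) {w \<in> fst G. \<phi> w = c}"
  shows "\<phi> ` fst (contract_edge G x z) = \<phi> ` fst G"
    and "\<forall>c\<in>\<phi> ` fst (contract_edge G x z).
           connected_in (snd (contract_edge G x z)) {w \<in> fst (contract_edge G x z). \<phi> w = c}"
proof -
  let ?G1 = "contract_edge G x z"
  have bag: "{w \<in> fst ?G1. \<phi> w = c} = merge x z ` {w \<in> fst G. \<phi> w = c}" for c
    using bag_contract_edge[OF G xz(1), of \<phi>] xz(2) by simp
  show image: "\<phi> ` fst ?G1 = \<phi> ` fst G"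
  proof (rule set_eqI)
    fix c
    have "c \<in> \<phi> ` fst ?G1 \<longleftrightarrow> {w \<in> fst ?G1. \<phi> w = c} \<noteq> {}" by blast
    also have "\<dots> \<longleftrightarrow> {w \<in> fst G. \<phi> w = c} \<noteq> {}" unfolding bag by (simp only: image_is_empty)
    also have "\<dots> \<longleftrightarrow> c \<in> \<phi> ` fst G" by blast
    finally show "c \<in> \<phi> ` fst ?G1 \<longleftrightarrow> c \<in> \<phi> ` fst G" .
  qed
  show "\<forall>c\<in>\<phi> ` fst ?G1. connected_in (snd ?G1) {w \<in> fst ?G1. \<phi> w = c}"
  proof
    fix c assume "c \<in> \<phi> ` fst ?G1"
    then have "connected_in (snd G) {w \<in> fst G. \<phi> w = c}" using bags image by blast
    then show "connected_in (snd ?G1) {w \<in> fst ?G1. \<phi> w = c}"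
      unfolding bag by (rule connected_in_image_merge)
  qed
qed

text \<open>Contract edges inside bags until \<phi> is injective; connectivity of the bags guarantees that
  such an edge exists as long as some bag has two vertices.\<close>

lemma contracts_to_bag_representatives:
  assumes "finite_graph G" "\<forall>c\<in>\<phi> ` fst G. connected_in (snd G) {x \<in> fst G. \<phi> x = c}"
  shows "\<exists>G'. contracts_to G G' \<and> bij_betw \<phi> (fst G') (\<phi> ` fst G) \<and>
    (\<forall>x\<in>fst G'. \<forall>y\<in>fst G'. {x, y} \<in> snd G' \<longleftrightarrow> \<phi> x \<noteq> \<phi> y \<and> bags_adjacent G \<phi> (\<phi> x) (\<phi> y))"
  using assms
proof (induction "card (fst G)" arbitrary: G rule: less_induct)
  case less
  show ?case
  proof (cases "inj_on \<phi> (fst G)")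
    case True
    have "{x, y} \<in> snd G \<longleftrightarrow> \<phi> x \<noteq> \<phi> y \<and> bags_adjacent G \<phi> (\<phi> x) (\<phi> y)"
      if "x \<in> fst G" "y \<in> fst G" for x y
      using that True finite_graph_edge[OF less.prems(1)]
      unfolding bags_adjacent_def inj_on_def by metis
    then show ?thesis using True contracts_to.refl bij_betw_imageI by blast
  next
    case False
    then obtain x y where xy: "x \<in> fst G" "y \<in> fst G" "x \<noteq> y" "\<phi> x = \<phi> y"
      unfolding inj_on_def by blast
    then obtain z where z: "{x, z} \<in> snd G" "z \<in> fst G" "\<phi> z = \<phi> x"
      using connected_in_neighbour[of "snd G" "{w \<in> fst G. \<phi> w = \<phi> x}" x y] less.prems(2)
      by auto
    let ?G1 = "contract_edge G x z"
    have "x \<noteq> z" using finite_graph_edge[OF less.prems(1) z(1)] by simp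
    have "finite (fst G)" using less.prems(1) by (simp add: finite_graph_def)
    from this z(2) have smaller: "card (fst ?G1) < card (fst G)"
      unfolding fst_contract_edge by (rule card_Diff1_less)
    note G1 = finite_graph_contract_edge[OF less.prems(1) z(1)]
      contract_edge_in_bag[OF less.prems(1) z(1) z(3)[symmetric] less.prems(2)]
    obtain G' where G': "contracts_to ?G1 G'" "bij_betw \<phi> (fst G') (\<phi> ` fst G)"
      "\<forall>x\<in>fst G'. \<forall>y\<in>fst G'. {x, y} \<in> snd G' \<longleftrightarrow> \<phi> x \<noteq> \<phi> y \<and> bags_adjacent ?G1 \<phi> (\<phi> x) (\<phi> y)"
      using less.hyps[OF smaller G1(1) G1(3)] unfolding G1(2) by blast
    have "contracts_to G G'" using contracts_to.step[OF z(1) \<open>x \<noteq> z\<close> G'(1)] .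
    moreover have "\<forall>x\<in>fst G'. \<forall>y\<in>fst G'. {x, y} \<in> snd G' \<longleftrightarrow> \<phi> x \<noteq> \<phi> y \<and> bags_adjacent G \<phi> (\<phi> x) (\<phi> y)"
      using G'(3) bags_adjacent_contract_edge[OF less.prems(1) z(1) z(3)[symmetric]] by blast
    ultimately show ?thesis using G'(2) by blast
  qed
qed

section \<open>Contractions onto paths as labellings\<close>

text \<open>The label of a vertex is the vertex of the path 0 - 1 - \<dots> - (k-1) that it is contracted to.\<close>

definition path_labelling :: "'a graph \<Rightarrow> nat \<Rightarrow> ('a \<Rightarrow> int) \<Rightarrow> bool" where
  "path_labelling G k \<psi> \<longleftrightarrow> \<psi> ` fst G = {0..<int k} \<and>
     (\<forall>x y. {x, y} \<in> snd G \<longrightarrow> \<psi> x \<le> \<psi> y + 1) \<and>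
     (\<forall>c. connected_in (snd G) {x \<in> fst G. \<psi> x = c})"

lemma edge_path_graph: "{a, b} \<in> snd (path_graph k) \<longleftrightarrow> (b = Suc a \<or> a = Suc b) \<and> max a b < k"
  unfolding path_graph_def by (auto simp: doubleton_eq_iff)

lemma edge_path_graph_nat:
  "0 \<le> a \<Longrightarrow> a < int k \<Longrightarrow> 0 \<le> b \<Longrightarrow> b < int k \<Longrightarrow>
    {nat a, nat b} \<in> snd (path_graph k) \<longleftrightarrow> b = a + 1 \<or> a = b + 1"
  unfolding edge_path_graph max_def by presburger

lemma connected_in_empty: "connected_in E {}"
  by (simp add: connected_in_def)

lemma path_labelling_reverse:
  assumes "path_labelling G k \<psi>"
  shows "path_labelling G k (\<lambda>x. int k - 1 - \<psi> x)"
proof -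
  have "(\<lambda>x. int k - 1 - \<psi> x) ` fst G = (\<lambda>i. int k - 1 - i) ` {0..<int k}"
    using assms unfolding path_labelling_def by (metis image_image)
  also have "\<dots> = {0..<int k}"
    by (auto simp: image_iff intro!: bexI[where x = "int k - 1 - _"])
  finally have "(\<lambda>x. int k - 1 - \<psi> x) ` fst G = {0..<int k}" .
  moreover have "int k - 1 - \<psi> x \<le> int k - 1 - \<psi> y + 1" if "{x, y} \<in> snd G" for x y
  proof -
    have "{y, x} \<in> snd G" using that by (simp add: insert_commute)
    then have "\<psi> y \<le> \<psi> x + 1" using assms unfolding path_labelling_def by blast
    then show ?thesis by linarith
  qed
  moreover have "connected_in (snd G) {x \<in> fst G. int k - 1 - \<psi> x = c}" for c
  proof -
    have "{x \<in> fst G. int k - 1 - \<psi> x = c} = {x \<in> fst G. \<psi> x = int k - 1 - c}" by auto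
    then show ?thesis using assms unfolding path_labelling_def by simp
  qed
  ultimately show ?thesis unfolding path_labelling_def by blast
qed

lemma path_labelling_of_contraction:
  assumes G: "finite_graph G" and "has_contraction G (path_graph k)"
  obtains \<psi> where "path_labelling G k \<psi>"
proof -
  obtain G' g where G': "contracts_to G G'" and g: "bij_betw g (fst G') {0..<k}"
    and g_edge: "\<forall>x\<in>fst G'. \<forall>y\<in>fst G'. {x, y} \<in> snd G' \<longleftrightarrow> {g x, g y} \<in> snd (path_graph k)"
    using assms(2) unfolding has_contraction_def graph_iso_def path_graph_def by auto
  obtain \<phi> where \<phi>: "contraction_map G G' \<phi>" using contracts_to_contraction_map[OF G' G] .
  then have \<phi>_in: "\<phi> x \<in> fst G'" if "x \<in> fst G" for x
    using that unfolding contraction_map_def by blast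
  define \<psi> where "\<psi> x = int (g (\<phi> x))" for x
  have "\<psi> ` fst G = int ` g ` \<phi> ` fst G" by (simp add: \<psi>_def image_image)
  also have "\<dots> = {0..<int k}"
    using \<phi> g by (simp add: contraction_map_def bij_betw_def image_int_atLeastLessThan)
  finally have image: "\<psi> ` fst G = {0..<int k}" .
  have lipschitz: "\<psi> x \<le> \<psi> y + 1" if xy: "{x, y} \<in> snd G" for x y
  proof (cases "\<phi> x = \<phi> y")
    case False
    then have "{\<phi> x, \<phi> y} \<in> snd G'" using \<phi> xy unfolding contraction_map_def by blast
    moreover have "\<phi> x \<in> fst G'" "\<phi> y \<in> fst G'" using \<phi>_in finite_graph_edge[OF G xy] by auto
    ultimately have "{g (\<phi> x), g (\<phi> y)} \<in> snd (path_graph k)" using g_edge by blast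
    then show ?thesis unfolding \<psi>_def edge_path_graph by auto
  qed (simp add: \<psi>_def)
  have "connected_in (snd G) {x \<in> fst G. \<psi> x = c}" for c
  proof (cases "\<exists>y\<in>fst G'. int (g y) = c")
    case True
    then obtain y where y: "y \<in> fst G'" "int (g y) = c" by blast
    have "{x \<in> fst G. \<psi> x = c} = {x \<in> fst G. \<phi> x = y}"
      using y \<phi>_in g by (auto simp: \<psi>_def bij_betw_def inj_on_eq_iff)
    then show ?thesis using \<phi> y(1) unfolding contraction_map_def by simp
  next
    case False
    then have "{x \<in> fst G. \<psi> x = c} = {}" using \<phi>_in unfolding \<psi>_def by blast
    then show ?thesis using connected_in_empty by metis
  qed
  with image lipschitz show ?thesis using that unfolding path_labelling_def by blast
qed

lemma bags_adjacent_commute: "bags_adjacent G \<phi> c d \<Longrightarrow> bags_adjacent G \<phi> d c"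
  unfolding bags_adjacent_def by (metis insert_commute)

lemma bags_adjacent_path_labelling:
  "path_labelling G k \<psi> \<Longrightarrow> bags_adjacent G \<psi> c d \<Longrightarrow> d \<le> c + 1"
  unfolding path_labelling_def bags_adjacent_def by (metis insert_commute)

lemma bags_adjacent_path_labelling_iff:
  assumes \<psi>: "path_labelling G k \<psi>"
    and consecutive: "\<And>c. 0 \<le> c \<Longrightarrow> c + 1 < int k \<Longrightarrow> bags_adjacent G \<psi> c (c + 1)"
    and range: "0 \<le> a" "a < int k" "0 \<le> b" "b < int k" and "a \<noteq> b"
  shows "bags_adjacent G \<psi> a b \<longleftrightarrow> b = a + 1 \<or> a = b + 1"
proof
  assume "bags_adjacent G \<psi> a b"
  then have "b \<le> a + 1" "a \<le> b + 1"
    using bags_adjacent_path_labelling[OF \<psi>] bags_adjacent_commute[of G \<psi> a] by simp_all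
  with \<open>a \<noteq> b\<close> show "b = a + 1 \<or> a = b + 1" by arith
next
  assume "b = a + 1 \<or> a = b + 1"
  then show "bags_adjacent G \<psi> a b"
  proof
    assume "b = a + 1"
    then show ?thesis using consecutive[of a] range by simp
  next
    assume "a = b + 1"
    then have "bags_adjacent G \<psi> b a" using consecutive[of b] range by simp
    then show ?thesis by (rule bags_adjacent_commute)
  qed
qed

text \<open>Without the last hypothesis the levels of a labelling need not be adjacent, e.g. for a
  disconnected graph.\<close>

lemma has_contraction_of_path_labelling:
  assumes G: "finite_graph G" and \<psi>: "path_labelling G k \<psi>"
    and consecutive: "\<And>c. 0 \<le> c \<Longrightarrow> c + 1 < int k \<Longrightarrow> bags_adjacent G \<psi> c (c + 1)"
  shows "has_contraction G (path_graph k)"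
proof -
  have image: "\<psi> ` fst G = {0..<int k}" using \<psi> by (simp add: path_labelling_def)
  have "\<forall>c\<in>\<psi> ` fst G. connected_in (snd G) {x \<in> fst G. \<psi> x = c}"
    using \<psi> unfolding path_labelling_def by blast
  from contracts_to_bag_representatives[OF G this] obtain G' where G': "contracts_to G G'"
    and bij: "bij_betw \<psi> (fst G') {0..<int k}"
    and edges: "\<forall>x\<in>fst G'. \<forall>y\<in>fst G'. {x, y} \<in> snd G' \<longleftrightarrow> \<psi> x \<noteq> \<psi> y \<and> bags_adjacent G \<psi> (\<psi> x) (\<psi> y)"
    unfolding image by blast
  have "bij_betw nat {0..<int k} {0..<k}"
    by (rule bij_betw_byWitness[where f' = int]) auto
  with bij have "bij_betw (nat \<circ> \<psi>) (fst G') (fst (path_graph k))"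
    unfolding path_graph_def fst_conv by (rule bij_betw_trans)
  moreover have "{x, y} \<in> snd G' \<longleftrightarrow> {(nat \<circ> \<psi>) x, (nat \<circ> \<psi>) y} \<in> snd (path_graph k)"
    if "x \<in> fst G'" "y \<in> fst G'" for x y
  proof -
    have range: "0 \<le> \<psi> x" "\<psi> x < int k" "0 \<le> \<psi> y" "\<psi> y < int k"
      using bij that unfolding bij_betw_def by auto
    have "{x, y} \<in> snd G' \<longleftrightarrow> \<psi> x \<noteq> \<psi> y \<and> bags_adjacent G \<psi> (\<psi> x) (\<psi> y)"
      using edges that by blast
    also have "\<dots> \<longleftrightarrow> \<psi> y = \<psi> x + 1 \<or> \<psi> x = \<psi> y + 1"
      using bags_adjacent_path_labelling_iff[OF \<psi> consecutive range] by (cases "\<psi> x = \<psi> y") auto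
    also have "\<dots> \<longleftrightarrow> {(nat \<circ> \<psi>) x, (nat \<circ> \<psi>) y} \<in> snd (path_graph k)"
      using edge_path_graph_nat range by simp
    finally show ?thesis .
  qed
  ultimately have "graph_iso G' (path_graph k)" unfolding graph_iso_def by blast
  with G' show ?thesis unfolding has_contraction_def by blast
qed

section \<open>The constructed graph\<close>

locale hypergraph_reduction =
  fixes Q :: "'q set" and S :: "nat \<Rightarrow> 'q set" and n :: nat
  assumes finite_Q: "finite Q" and n_ge_2: "n \<ge> 2"
    and S_nonempty: "\<forall>j\<in>{1..n}. S j \<noteq> {} \<and> S j \<subseteq> Q" and S_n: "S n = Q"
begin

abbreviation "G \<equiv> constr_graph Q S n"
abbreviation "V \<equiv> fst G"
abbreviation "E \<equiv> snd G"

lemma edges: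
  shows edge_Qij_Qv: "j \<in> {1..n} \<Longrightarrow> q \<in> S j \<Longrightarrow> {Qij q j, Qv q} \<in> E"
    and edge_Qij_Sv: "j \<in> {1..n} \<Longrightarrow> q \<in> S j \<Longrightarrow> {Qij q j, Sv j} \<in> E"
    and edge_Qv_Sp: "j \<in> {1..n} \<Longrightarrow> q \<in> S j \<Longrightarrow> {Qv q, Sp j} \<in> E"
    and edge_Sv_Sp: "j \<in> {1..n} \<Longrightarrow> k \<in> {1..n} \<Longrightarrow> {Sv j, Sp k} \<in> E"
    and edge_Qstar_U1: "{Qstar, U1} \<in> E"
    and edge_Qstar_U2: "{Qstar, U2} \<in> E"
    and edge_Qstar_Qij: "j \<in> {1..n} \<Longrightarrow> q \<in> S j \<Longrightarrow> {Qstar, Qij q j} \<in> E"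
    and edge_U1_Sv: "j \<in> {1..n} \<Longrightarrow> {U1, Sv j} \<in> E"
    and edge_U2_Sv: "j \<in> {1..n} \<Longrightarrow> {U2, Sv j} \<in> E"
    and edge_U1_Vv: "{U1, Vv} \<in> E"
    and edge_U2_Vv: "{U2, Vv} \<in> E"
    and edge_Wv_Sp: "j \<in> {1..n} \<Longrightarrow> {Wv, Sp j} \<in> E"
  unfolding constr_graph_def Qprime_def snd_conv Un_iff mem_Collect_eq
  by (iprover intro: disjI1 disjI2 exI conjI refl insertI1 insertI2)+

lemma edge_sym: "{x, y} \<in> E \<Longrightarrow> {y, x} \<in> E"
  by (simp add: insert_commute)

lemma n_in_range: "n \<in> {1..n}"
  using n_ge_2 by simp

lemma one_le_n: "Suc 0 \<le> n"
  using n_ge_2 by simp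

lemma other_index: "j \<in> {1..n} \<Longrightarrow> \<exists>k\<in>{1..n}. k \<noteq> j"
  using n_ge_2 by (intro bexI[of _ "if j = 1 then 2 else 1"]) auto

lemma Qv_in_S_n: "q \<in> Q \<Longrightarrow> q \<in> S n"
  using S_n by simp

lemma S_sub_Q: "j \<in> {1..n} \<Longrightarrow> q \<in> S j \<Longrightarrow> q \<in> Q"
  using S_nonempty by blast

lemma vertex_simps [simp]:
  "Qv q \<in> V \<longleftrightarrow> q \<in> Q" "Sv j \<in> V \<longleftrightarrow> j \<in> {1..n}" "Sp j \<in> V \<longleftrightarrow> j \<in> {1..n}"
  "Qij q j \<in> V \<longleftrightarrow> j \<in> {1..n} \<and> q \<in> S j"
  "Qstar \<in> V" "U1 \<in> V" "U2 \<in> V" "Vv \<in> V" "Wv \<in> V"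
  by (auto simp: constr_graph_def Qprime_def)

lemma edge_cases:
  assumes "e \<in> E"
  obtains (QQ) q j where "j \<in> {1..n}" "q \<in> S j" "e = {Qij q j, Qv q}"
  | (QS) q j where "j \<in> {1..n}" "q \<in> S j" "e = {Qij q j, Sv j}"
  | (QSp) q j where "j \<in> {1..n}" "q \<in> S j" "e = {Qv q, Sp j}"
  | (SSp) j k where "j \<in> {1..n}" "k \<in> {1..n}" "e = {Sv j, Sp k}"
  | (sU1) "e = {Qstar, U1}"
  | (sU2) "e = {Qstar, U2}"
  | (sQ) q j where "j \<in> {1..n}" "q \<in> S j" "e = {Qstar, Qij q j}"
  | (U1S) j where "j \<in> {1..n}" "e = {U1, Sv j}"
  | (U2S) j where "j \<in> {1..n}" "e = {U2, Sv j}"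
  | (U1V) "e = {U1, Vv}"
  | (U2V) "e = {U2, Vv}"
  | (WSp) j where "j \<in> {1..n}" "e = {Wv, Sp j}"
  using assms unfolding constr_graph_def snd_conv Un_iff Qprime_def
  apply (elim disjE)
  apply (elim CollectE exE conjE, rule QQ; assumption)
  apply (elim CollectE exE conjE, rule QS; assumption)
  apply (elim CollectE exE conjE, rule QSp; assumption)
  apply (elim CollectE exE conjE, rule SSp; assumption)
  apply (elim insertE, rule sU1, assumption, rule sU2, assumption, simp)
  apply (elim CollectE exE conjE, rule sQ, assumption, assumption, simp)
  apply (elim CollectE exE conjE, rule U1S; assumption)
  apply (elim CollectE exE conjE, rule U2S; assumption)
  apply (elim insertE, rule U1V, assumption, rule U2V, assumption, simp)
  apply (elim CollectE exE conjE, rule WSp; assumption)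
  done

lemma finite_graph_G: "finite_graph G"
  unfolding finite_graph_def
proof
  have "Qprime S n \<subseteq> (\<lambda>(q, j). Qij q j) ` (Q \<times> {1..n})"
    unfolding Qprime_def using S_sub_Q by auto
  then have "finite (Qprime S n)" using finite_Q finite_subset by blast
  then show "finite V" using finite_Q by (simp add: constr_graph_def)
  show "\<forall>e\<in>E. e \<subseteq> V \<and> card e = 2"
  proof
    fix e assume "e \<in> E"
    then show "e \<subseteq> V \<and> card e = 2"
      by (cases rule: edge_cases) (auto intro: S_sub_Q)
  qed
qed

lemma neighbours_U1: "{U1, z} \<in> E \<Longrightarrow> z = Qstar \<or> z = Vv \<or> (\<exists>j. z = Sv j)"
  by (erule edge_cases) (auto simp: doubleton_eq_iff)

lemma neighbours_Sp: "{Sp j, z} \<in> E \<Longrightarrow> z = Wv \<or> (\<exists>k. z = Sv k) \<or> (\<exists>q. z = Qv q \<and> q \<in> S j)"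
  by (erule edge_cases) (auto simp: doubleton_eq_iff)

lemma neighbours_Sv: "{Sv j, z} \<in> E \<Longrightarrow> z = U1 \<or> z = U2 \<or> (\<exists>k. z = Sp k) \<or> (\<exists>q. z = Qij q j)"
  by (erule edge_cases) (auto simp: doubleton_eq_iff)

lemma neighbours_Qij: "{Qij q j, z} \<in> E \<Longrightarrow> z = Qstar \<or> z = Qv q \<or> z = Sv j"
  by (erule edge_cases) (auto simp: doubleton_eq_iff)

end

section \<open>From a 2-colouring to a contraction\<close>

definition colour_level :: "'q set \<Rightarrow> 'q gvert \<Rightarrow> int" where
  "colour_level Q1 x = (case x of
     Wv \<Rightarrow> 0 | Sp j \<Rightarrow> 1 | Qv q \<Rightarrow> (if q \<in> Q1 then 1 else 2) | Sv j \<Rightarrow> 2 | Qij q j \<Rightarrow> 2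
   | Qstar \<Rightarrow> 3 | U1 \<Rightarrow> 3 | U2 \<Rightarrow> 3 | Vv \<Rightarrow> 4)"

context hypergraph_reduction
begin

definition level_hub :: "int \<Rightarrow> 'q gvert" where
  "level_hub c = (if c = 0 then Wv else if c = 1 then Sp n else if c = 2 then Sv n
     else if c = 3 then Qstar else Vv)"

lemma colour_level_edge: "{x, y} \<in> E \<Longrightarrow> colour_level Q1 x \<le> colour_level Q1 y + 1"
  by (erule edge_cases) (auto simp: colour_level_def doubleton_eq_iff)

lemma colour_level_image: "colour_level Q1 ` V = {0..<5}"
proof
  show "colour_level Q1 ` V \<subseteq> {0..<5}"
    by (auto simp: colour_level_def split: gvert.splits)
  have "colour_level Q1 Wv = 0" "colour_level Q1 (Sp n) = 1" "colour_level Q1 (Sv n) = 2"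
    "colour_level Q1 Qstar = 3" "colour_level Q1 Vv = 4"
    by (simp_all add: colour_level_def)
  moreover have "{0..<5} = {0, 1, 2, 3, 4::int}" by auto
  ultimately show "{0..<5} \<subseteq> colour_level Q1 ` V"
    using n_in_range by (auto intro: rev_image_eqI)
qed

lemma colour_level_consecutive:
  assumes "0 \<le> c" "c + 1 < 5"
  shows "bags_adjacent G (colour_level Q1) c (c + 1)"
proof -
  have adj: "bags_adjacent G (colour_level Q1) (colour_level Q1 a) (colour_level Q1 b)"
    if "{a, b} \<in> E" for a b
    using that finite_graph_edge[OF finite_graph_G that] unfolding bags_adjacent_def by blast
  have "c \<in> {0, 1, 2, 3}" using assms by auto
  with adj[OF edge_Wv_Sp[OF n_in_range]] adj[OF edge_sym[OF edge_Sv_Sp[OF n_in_range n_in_range]]]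
    adj[OF edge_sym[OF edge_U1_Sv[OF n_in_range]]] adj[OF edge_U1_Vv]
  show ?thesis by (auto simp: colour_level_def)
qed

context
  fixes Q1 :: "'q set"
  assumes split: "\<forall>j\<in>{1..n}. Q1 \<inter> S j \<noteq> {} \<and> S j - Q1 \<noteq> {}"
begin

lemma Sv_reaches_Sv_n:
  assumes j: "j \<in> {1..n}"
  shows "(Sv j, Sv n) \<in> (induced_adj E {x \<in> V. colour_level Q1 x = 2})\<^sup>*"
proof -
  let ?R = "induced_adj E {x \<in> V. colour_level Q1 x = 2}"
  obtain q where q: "q \<in> S j" "q \<notin> Q1" using split j by blast
  then have "q \<in> S n" using S_n S_sub_Q j by blast
  have "(Sv j, Qij q j) \<in> ?R" "(Qij q j, Qv q) \<in> ?R" "(Qv q, Qij q n) \<in> ?R" "(Qij q n, Sv n) \<in> ?R"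
    using induced_adj_level[OF finite_graph_G, where f = "colour_level Q1" and c = 2] edge_Qij_Sv[OF j q(1)] edge_Qij_Qv[OF j q(1)]
      edge_Qij_Qv[OF n_in_range \<open>q \<in> S n\<close>] edge_Qij_Sv[OF n_in_range \<open>q \<in> S n\<close>] q(2)
    by (simp_all add: colour_level_def insert_commute)
  then show ?thesis by (meson converse_rtrancl_into_rtrancl r_into_rtrancl)
qed

lemma Qv_reaches_level_hub:
  assumes q: "q \<in> Q"
  shows "(Qv q, level_hub (colour_level Q1 (Qv q)))
    \<in> (induced_adj E {y \<in> V. colour_level Q1 y = colour_level Q1 (Qv q)})\<^sup>*"
proof (cases "q \<in> Q1")
  case True
  then have "(Qv q, Sp n) \<in> induced_adj E {y \<in> V. colour_level Q1 y = 1}"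
    using induced_adj_level[OF finite_graph_G edge_Qv_Sp[OF n_in_range Qv_in_S_n[OF q]],
        where f = "colour_level Q1" and c = 1]
    by (simp add: colour_level_def)
  then show ?thesis using True by (simp add: colour_level_def level_hub_def)
next
  case False
  let ?R = "induced_adj E {y \<in> V. colour_level Q1 y = 2}"
  have "(Qv q, Qij q n) \<in> ?R" "(Qij q n, Sv n) \<in> ?R"
    using induced_adj_level[OF finite_graph_G, where f = "colour_level Q1" and c = 2]
      edge_Qij_Qv[OF n_in_range Qv_in_S_n[OF q]] edge_Qij_Sv[OF n_in_range Qv_in_S_n[OF q]] False
    by (simp_all add: colour_level_def insert_commute)
  then show ?thesis using False by (simp add: colour_level_def level_hub_def)
qed

lemma reaches_level_hub:
  assumes x: "x \<in> V" "colour_level Q1 x = c"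
  shows "(x, level_hub c) \<in> (induced_adj E {y \<in> V. colour_level Q1 y = c})\<^sup>*"
proof -
  let ?R = "induced_adj E {y \<in> V. colour_level Q1 y = c}"
  note step = induced_adj_level[OF finite_graph_G, where f = "colour_level Q1" and c = c]
  show ?thesis
  proof (cases x)
    case (Qv q)
    with x have "q \<in> Q" "c = colour_level Q1 (Qv q)" by simp_all
    then show ?thesis using Qv_reaches_level_hub Qv by simp
  next
    case (Sp j)
    then have j: "j \<in> {1..n}" using x by simp
    then obtain q where q: "q \<in> S j" "q \<in> Q1" using split by blast
    then have "q \<in> S n" using Qv_in_S_n S_sub_Q j by blast
    have "(Sp j, Qv q) \<in> ?R" "(Qv q, Sp n) \<in> ?R"
      using step edge_Qv_Sp[OF j q(1)] edge_Qv_Sp[OF n_in_range \<open>q \<in> S n\<close>] x Sp q(2)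
      by (simp_all add: colour_level_def insert_commute)
    then show ?thesis using x Sp by (simp add: colour_level_def level_hub_def)
  next
    case (Qij q j)
    then have j: "j \<in> {1..n}" "q \<in> S j" using x by simp_all
    have "(Qij q j, Sv j) \<in> ?R" using step edge_Qij_Sv[OF j] x Qij by (simp add: colour_level_def)
    then show ?thesis using Sv_reaches_Sv_n[OF j(1)] x Qij by (simp add: colour_level_def level_hub_def)
  next
    case U1
    then have "(U1, Qstar) \<in> ?R" using step edge_Qstar_U1 x by (simp add: colour_level_def insert_commute)
    then show ?thesis using x U1 by (simp add: colour_level_def level_hub_def)
  next
    case U2
    then have "(U2, Qstar) \<in> ?R" using step edge_Qstar_U2 x by (simp add: colour_level_def insert_commute)
    then show ?thesis using x U2 by (simp add: colour_level_def level_hub_def)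
  qed (use x Sv_reaches_Sv_n in \<open>simp_all add: colour_level_def level_hub_def\<close>)
qed

lemma colour_level_connected: "connected_in E {x \<in> V. colour_level Q1 x = c}"
  by (rule connected_inI_hub[where h = "level_hub c"]) (use reaches_level_hub in auto)

end

lemma has_contraction_if_two_colourable:
  assumes "two_colourable Q S n"
  shows "has_contraction G (path_graph 5)"
proof -
  obtain Q1 Q2 where "Q1 \<union> Q2 = Q" "Q1 \<inter> Q2 = {}" and meets: "\<forall>j\<in>{1..n}. Q1 \<inter> S j \<noteq> {} \<and> Q2 \<inter> S j \<noteq> {}"
    using assms unfolding two_colourable_def by blast
  then have "\<forall>j\<in>{1..n}. Q1 \<inter> S j \<noteq> {} \<and> S j - Q1 \<noteq> {}" by blast
  then have "path_labelling G 5 (colour_level Q1)"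
    unfolding path_labelling_def
    using colour_level_image colour_level_edge colour_level_connected by simp
  then show ?thesis
    using has_contraction_of_path_labelling[OF finite_graph_G] colour_level_consecutive by simp
qed

section \<open>From a contraction to a 2-colouring\<close>

text \<open>The pairs of vertices at distance 4.\<close>

definition far_pair :: "'q gvert \<Rightarrow> 'q gvert \<Rightarrow> bool" where
  "far_pair a b \<longleftrightarrow> {a, b} = {Wv, Vv} \<or> {a, b} = {Wv, Qstar} \<or> (\<exists>q. {a, b} = {Qv q, Vv})"

definition near :: "'q gvert \<Rightarrow> 'q gvert \<Rightarrow> bool" where
  "near x y \<longleftrightarrow> x = y \<or> {x, y} \<in> E"

text \<open>Two vertices that do not form a far pair have equal or adjacent landmarks, which puts them
  at distance at most 3.\<close>

definition landmarks :: "'q gvert \<Rightarrow> 'q gvert set" where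
  "landmarks x = (case x of
     Sv j \<Rightarrow> {Sv j, Sp n, U1, U2} | Sp j \<Rightarrow> {Sp j, Sv n, Wv} | Qv q \<Rightarrow> {Qv q, Sp n, Qij q n}
   | Qij q j \<Rightarrow> {Qij q j, Qstar, Sv j, Qv q} | Qstar \<Rightarrow> {Qstar, U1, U2}
   | U1 \<Rightarrow> {U1, Sv n, Qstar, Vv} | U2 \<Rightarrow> {U2, Sv n, Qstar, Vv} | Vv \<Rightarrow> {Vv, U1, U2}
   | Wv \<Rightarrow> {Wv, Sp n})"

lemma near_landmarks: "x \<in> V \<Longrightarrow> c \<in> landmarks x \<Longrightarrow> near x c"
  by (cases x) (auto simp: landmarks_def near_def one_le_n Qv_in_S_n edges edges[THEN edge_sym])

lemma landmarks_near:
  assumes "a \<in> V" "b \<in> V" "\<not> far_pair a b"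
  shows "\<exists>c\<in>landmarks a. \<exists>d\<in>landmarks b. near c d"
  using assms
  by (cases a; cases b) (simp_all add: far_pair_def landmarks_def near_def doubleton_eq_iff
      one_le_n Qv_in_S_n edges edges[THEN edge_sym])

context
  fixes \<psi> :: "'q gvert \<Rightarrow> int"
  assumes \<psi>: "path_labelling G 5 \<psi>"
begin

lemma label_edge: "{x, y} \<in> E \<Longrightarrow> \<psi> x \<le> \<psi> y + 1 \<and> \<psi> y \<le> \<psi> x + 1"
  using \<psi> edge_sym unfolding path_labelling_def by blast

lemma label_near: "near x y \<Longrightarrow> \<psi> y \<le> \<psi> x + 1"
  unfolding near_def using label_edge by auto

lemma level_connected: "connected_in E {x \<in> V. \<psi> x = c}"
  using \<psi> unfolding path_labelling_def by blast

lemma far_pair_if_labels_0_4: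
  assumes "a \<in> V" "b \<in> V" "\<psi> a = 0" "\<psi> b = 4"
  shows "far_pair a b"
proof (rule ccontr)
  assume "\<not> far_pair a b"
  then obtain c d where "c \<in> landmarks a" "d \<in> landmarks b" "near c d"
    using landmarks_near assms(1,2) by blast
  moreover have "near a c" "near b d" using near_landmarks assms(1,2) calculation by auto
  moreover have "near d b" using \<open>near b d\<close> by (auto simp: near_def insert_commute)
  ultimately have "\<psi> b \<le> \<psi> a + 3"
    using label_near[of a c] label_near[of c d] label_near[of d b] by linarith
  with assms(3,4) show False by simp
qed

text \<open>Both q^i_n and u_1 would be labelled 3, but no neighbour of q^i_n is.\<close>

lemma labels_not_Wv_Qstar: "\<psi> Wv = 0 \<Longrightarrow> \<psi> Qstar = 4 \<Longrightarrow> False"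
proof -
  assume W: "\<psi> Wv = 0" and Qstar: "\<psi> Qstar = 4"
  obtain q where q: "q \<in> S n" using S_nonempty n_in_range by blast
  have Sp_n: "\<psi> (Sp n) \<le> 1" and Sv_n: "\<psi> (Sv n) \<le> 2"
    using label_edge[OF edge_Wv_Sp[OF n_in_range]] label_edge[OF edge_Sv_Sp[OF n_in_range n_in_range]] W
    by linarith+
  have "\<psi> (Qij q n) = 3"
    using label_edge[OF edge_Qstar_Qij[OF n_in_range q]] label_edge[OF edge_Qij_Sv[OF n_in_range q]] Sv_n Qstar
    by linarith
  moreover have "\<psi> U1 = 3"
    using label_edge[OF edge_Qstar_U1] label_edge[OF edge_U1_Sv[OF n_in_range]] Sv_n Qstar by linarith
  ultimately obtain z where z: "{Qij q n, z} \<in> E" "z \<in> V" "\<psi> z = 3"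
    using connected_in_neighbour[OF level_connected[of 3], of "Qij q n" U1] q n_in_range by auto
  moreover have "\<psi> (Qv q) \<le> 2"
    using label_edge[OF edge_Qv_Sp[OF n_in_range q]] Sp_n by linarith
  ultimately show False using neighbours_Qij[OF z(1)] Qstar Sv_n by auto
qed

text \<open>Both u_1 and u_2 would be labelled 3, but no neighbour of u_1 is.\<close>

lemma labels_not_Qv_Vv: "q \<in> Q \<Longrightarrow> \<psi> (Qv q) = 0 \<Longrightarrow> \<psi> Vv = 4 \<Longrightarrow> False"
proof -
  assume "q \<in> Q" and Qv: "\<psi> (Qv q) = 0" and V: "\<psi> Vv = 4"
  then have q: "q \<in> S n" using S_n by simp
  have Sp_n: "\<psi> (Sp n) \<le> 1"
    using label_edge[OF edge_Qv_Sp[OF n_in_range q]] Qv by linarith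
  have Sv: "\<psi> (Sv j) \<le> 2" if "j \<in> {1..n}" for j
    using label_edge[OF edge_Sv_Sp[OF that n_in_range]] Sp_n by linarith
  have "\<psi> U1 = 3" "\<psi> U2 = 3"
    using label_edge[OF edge_U1_Vv] label_edge[OF edge_U1_Sv[OF n_in_range]]
      label_edge[OF edge_U2_Vv] label_edge[OF edge_U2_Sv[OF n_in_range]] Sv[OF n_in_range] V
    by linarith+
  then obtain z where z: "{U1, z} \<in> E" "z \<in> V" "\<psi> z = 3"
    using connected_in_neighbour[OF level_connected[of 3], of U1 U2] by auto
  moreover have "\<psi> Qstar \<le> 2"
    using label_edge[OF edge_Qstar_Qij[OF n_in_range q]] label_edge[OF edge_Qij_Qv[OF n_in_range q]] Qv
    by linarith
  ultimately show False using neighbours_U1[OF z(1)] V Sv by fastforce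
qed

context
  assumes W: "\<psi> Wv = 0" and V: "\<psi> Vv = 4"
begin

lemma forced_labels:
  shows Sp_label: "j \<in> {1..n} \<Longrightarrow> \<psi> (Sp j) = 1"
    and Sv_label: "j \<in> {1..n} \<Longrightarrow> \<psi> (Sv j) = 2"
    and U_label: "\<psi> U1 = 3" "\<psi> U2 = 3"
    and Qstar_label: "\<psi> Qstar = 3"
proof -
  have Sp_n: "\<psi> (Sp n) \<le> 1" using label_edge[OF edge_Wv_Sp[OF n_in_range]] W by linarith
  show U: "\<psi> U1 = 3" "\<psi> U2 = 3"
    using label_edge[OF edge_U1_Vv] label_edge[OF edge_U1_Sv[OF n_in_range]]
      label_edge[OF edge_U2_Vv] label_edge[OF edge_U2_Sv[OF n_in_range]]
      label_edge[OF edge_Sv_Sp[OF n_in_range n_in_range]] Sp_n V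
    by linarith+
  show Sv: "\<psi> (Sv j) = 2" if "j \<in> {1..n}" for j
    using label_edge[OF edge_Sv_Sp[OF that n_in_range]] label_edge[OF edge_U1_Sv[OF that]] Sp_n U
    by linarith
  show "\<psi> (Sp j) = 1" if "j \<in> {1..n}" for j
    using label_edge[OF edge_Sv_Sp[OF n_in_range that]] label_edge[OF edge_Wv_Sp[OF that]]
      Sv[OF n_in_range] W
    by linarith
  obtain z where z: "{U1, z} \<in> E" "z \<in> V" "\<psi> z = 3"
    using connected_in_neighbour[OF level_connected[of 3], of U1 U2] U by auto
  then show "\<psi> Qstar = 3" using neighbours_U1[OF z(1)] V Sv by fastforce
qed

lemma hyperedge_has_label_1:
  assumes j: "j \<in> {1..n}"
  shows "\<exists>q\<in>S j. \<psi> (Qv q) = 1"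
proof -
  obtain k where k: "k \<in> {1..n}" "k \<noteq> j" using other_index[OF j] by blast
  obtain z where z: "{Sp j, z} \<in> E" "z \<in> V" "\<psi> z = 1"
    using connected_in_neighbour[OF level_connected[of 1], of "Sp j" "Sp k"] Sp_label j k by auto
  then show ?thesis using neighbours_Sp[OF z(1)] W Sv_label by fastforce
qed

text \<open>Otherwise the component of S_j in the level 2 consists of S_j and its vertices q^i_j only.\<close>

lemma hyperedge_has_label_not_1:
  assumes j: "j \<in> {1..n}"
  shows "\<exists>q\<in>S j. \<psi> (Qv q) \<noteq> 1"
proof (rule ccontr)
  assume "\<not> (\<exists>q\<in>S j. \<psi> (Qv q) \<noteq> 1)"
  then have Qv: "\<psi> (Qv q) = 1" if "q \<in> S j" for q using that by blast
  obtain k where k: "k \<in> {1..n}" "k \<noteq> j" using other_index[OF j] by blast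
  let ?C = "insert (Sv j) (range (\<lambda>q. Qij q j)) :: 'q gvert set"
  have closed: "b \<in> ?C" if a: "a \<in> ?C" "a \<in> {x \<in> V. \<psi> x = 2}" and ab: "{a, b} \<in> E"
    and b: "b \<in> {x \<in> V. \<psi> x = 2}" for a b
    using a(1)
  proof (elim insertE rangeE)
    assume "a = Sv j"
    then show ?thesis using neighbours_Sv[of j b] ab b U_label Sp_label by auto
  next
    fix q assume "a = Qij q j"
    then show ?thesis using neighbours_Qij[of q j b] ab a(2) b Qstar_label Qv by auto
  qed
  have "Sv k \<in> ?C"
  proof (rule connected_in_closed[OF level_connected[of 2], of "Sv j"])
    show "Sv j \<in> {x \<in> V. \<psi> x = 2}" "Sv k \<in> {x \<in> V. \<psi> x = 2}" using j k Sv_label by auto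
    show "Sv j \<in> ?C" by simp
  qed (rule closed)
  with k(2) show False by auto
qed

lemma two_colourable_if_labels_Wv_Vv: "two_colourable Q S n"
proof -
  let ?Q1 = "{q \<in> Q. \<psi> (Qv q) = 1}"
  have "?Q1 \<inter> S j \<noteq> {} \<and> (Q - ?Q1) \<inter> S j \<noteq> {}" if "j \<in> {1..n}" for j
    using hyperedge_has_label_1[OF that] hyperedge_has_label_not_1[OF that] S_sub_Q[OF that] by blast
  then show ?thesis unfolding two_colourable_def by (intro exI[of _ ?Q1] exI[of _ "Q - ?Q1"]) auto
qed

end

end

lemma two_colourable_if_has_contraction:
  assumes "has_contraction G (path_graph 5)"
  shows "two_colourable Q S n"
proof -
  obtain \<psi> where \<psi>: "path_labelling G 5 \<psi>"
    using path_labelling_of_contraction[OF finite_graph_G assms] .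
  then have "0 \<in> \<psi> ` V" "4 \<in> \<psi> ` V" unfolding path_labelling_def by auto
  then obtain a b where ab: "a \<in> V" "\<psi> a = 0" "b \<in> V" "\<psi> b = 4" by force
  have \<psi>': "path_labelling G 5 (\<lambda>x. 4 - \<psi> x)"
    using path_labelling_reverse[OF \<psi>] by simp
  from far_pair_if_labels_0_4[OF \<psi> ab(1,3,2,4)] consider
      "a = Wv" "b = Vv" | "a = Vv" "b = Wv" | "a = Wv" "b = Qstar" | "a = Qstar" "b = Wv"
    | q where "q \<in> Q" "a = Qv q" "b = Vv" | q where "q \<in> Q" "a = Vv" "b = Qv q"
    using ab(1,3) unfolding far_pair_def doubleton_eq_iff by fastforce
  then show ?thesis
  proof cases
    case 1 then show ?thesis using two_colourable_if_labels_Wv_Vv[OF \<psi>] ab by simp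
  next
    case 2 then show ?thesis using two_colourable_if_labels_Wv_Vv[OF \<psi>'] ab by simp
  next
    case 3 then show ?thesis using labels_not_Wv_Qstar[OF \<psi>] ab by simp
  next
    case 4 then show ?thesis using labels_not_Wv_Qstar[OF \<psi>'] ab by simp
  next
    case (5 q) then show ?thesis using labels_not_Qv_Vv[OF \<psi>, of q] ab by simp
  next
    case (6 q) then show ?thesis using labels_not_Qv_Vv[OF \<psi>', of q] ab by simp
  qed
qed

end

theorem lemma3:
  fixes Q :: "'q set" and S :: "nat \<Rightarrow> 'q set" and n :: nat
  assumes "finite Q"
    and "n \<ge> 2"
    and "\<forall>j\<in>{1..n}. S j \<noteq> {} \<and> S j \<subseteq> Q"
    and "S n = Q"
  shows "two_colourable Q S n \<longleftrightarrow> has_contraction (constr_graph Q S n) (path_graph 5)"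
proof -
  interpret hypergraph_reduction Q S n
    using assms by unfold_locales
  show ?thesis
    using has_contraction_if_two_colourable two_colourable_if_has_contraction by blast
qed

end
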